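(* Assume Condition (T) (see context). Let $i\le d$ and suppose $\alpha_i>\widetilde\alpha_i=\alpha_{j_0}$ for some $j_0$ with $i\vartriangleleft j_0$. For $s\in\mathbb N$ set $u_i(s)=\mathbb E\,\pi_{ij_0}(s)^{\alpha_{j_0}}$. Then the limit $u_i=\lim_{s\to\infty}u_i(s)$ exists, and $0<u_i<\infty$.
   Context: $(\mathbf A_t)_{t\in\mathbb Z}$ is an i.i.d. sequence of copies of a random $d\times d$ matrix $\mathbf A$, entries $A_{ij,t}$, jointly with random vectors $\mathbf B_t$ forming i.i.d. copies of $(\mathbf A,\mathbf B)$. Condition (T): (T-1) $\mathbf A\ge 0$, $\mathbf B\ge 0$ entrywise a.s.; (T-2) $\mathbb P(B_i=0)<1$; (T-3) $\mathbb P(A_{ij}=0)=1$ whenever $i>j$; (T-4) there exist $\alpha_1,\dots,\alpha_d>0$, pairwise distinct, with $\mathbb E A_{ii}^{\alpha_i}=1$; (T-5) $\mathbb E A_{ij}^{\alpha_i}<\infty$; (T-6) $\mathbb E B_i^{\alpha_i}<\infty$; (T-7) $\mathbb E[A_{ii}^{\alpha_i}\log^+A_{ii}]<\infty$; (T-8) the law of $\log A_{ii}$ given $\{A_{ii}>0\}$ is non-arithmetic. Relations: $i\preccurlyeq j$ if $\mathbb P(A_{ij}>0)>0$; $i\trianglelefteq j$ if there is a chain $i=i(0)\preccurlyeq\dots\preccurlyeq i(m)=j$ ($m\ge0$); $i\vartriangleleft j$ if $i\trianglelefteq j$, $i\ne j$; $\widetilde\alpha_i=\min\{\alpha_j:i\trianglelefteq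 j\}$. $\pi_{ij}(s)$ denotes the $(i,j)$ entry of the product $\mathbf A_0\mathbf A_{-1}\cdots\mathbf A_{-s+1}$. *)

theory Defs
  imports "HOL-Probability.Probability"
begin

text \<open>Random matrices are modelled as A t \<omega> i j (entry (i,j) of A_t at outcome \<omega>),
  random vectors as B t \<omega> i, with indices i, j ranging over {1..d}.\<close>

definition coord_idx :: "nat \<Rightarrow> ((nat \<times> nat) + nat) set" where
  "coord_idx d = Inl ` ({1..d} \<times> {1..d}) \<union> Inr ` {1..d}"

definition AB_vec ::
  "nat \<Rightarrow> (int \<Rightarrow> 'a \<Rightarrow> nat \<Rightarrow> nat \<Rightarrow> real) \<Rightarrow> (int \<Rightarrow> 'a \<Rightarrow> nat \<Rightarrow> real)
     \<Rightarrow> int \<Rightarrow> 'a \<Rightarrow> ((nat \<times> nat) + nat) \<Rightarrow> real" where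
  "AB_vec d A B t \<omega> = (\<lambda>k\<in>coord_idx d. case k of Inl (i, j) \<Rightarrow> A t \<omega> i j | Inr i \<Rightarrow> B t \<omega> i)"

definition AB_space :: "nat \<Rightarrow> (((nat \<times> nat) + nat) \<Rightarrow> real) measure" where
  "AB_space d = PiM (coord_idx d) (\<lambda>_. borel)"

definition iid_AB ::
  "'a measure \<Rightarrow> nat \<Rightarrow> (int \<Rightarrow> 'a \<Rightarrow> nat \<Rightarrow> nat \<Rightarrow> real) \<Rightarrow> (int \<Rightarrow> 'a \<Rightarrow> nat \<Rightarrow> real) \<Rightarrow> bool" where
  "iid_AB M d A B \<longleftrightarrow>
     prob_space.indep_vars M (\<lambda>_. AB_space d) (AB_vec d A B) UNIV \<and>
     (\<forall>t. distr M (AB_space d) (AB_vec d A B t) = distr M (AB_space d) (AB_vec d A B 0))"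

definition nonarith_log :: "'a measure \<Rightarrow> ('a \<Rightarrow> real) \<Rightarrow> bool" where
  "nonarith_log M X \<longleftrightarrow>
     \<not> (\<exists>h>0. AE \<omega> in M. X \<omega> > 0 \<longrightarrow> ln (X \<omega>) \<in> {h * real_of_int k | k. True})"

definition condT ::
  "'a measure \<Rightarrow> nat \<Rightarrow> (int \<Rightarrow> 'a \<Rightarrow> nat \<Rightarrow> nat \<Rightarrow> real) \<Rightarrow> (int \<Rightarrow> 'a \<Rightarrow> nat \<Rightarrow> real)
     \<Rightarrow> (nat \<Rightarrow> real) \<Rightarrow> bool" where
  "condT M d A B \<alpha> \<longleftrightarrow>
     \<comment> \<open>(T-1)\<close>
     (AE \<omega> in M. (\<forall>i\<in>{1..d}. \<forall>j\<in>{1..d}. A 0 \<omega> i j \<ge> 0) \<and> (\<forall>i\<in>{1..d}. B 0 \<omega> i \<ge> 0)) \<and>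
     \<comment> \<open>(T-2)\<close>
     (\<forall>i\<in>{1..d}. measure M {\<omega>\<in>space M. B 0 \<omega> i = 0} < 1) \<and>
     \<comment> \<open>(T-3)\<close>
     (\<forall>i\<in>{1..d}. \<forall>j\<in>{1..d}. i > j \<longrightarrow> measure M {\<omega>\<in>space M. A 0 \<omega> i j = 0} = 1) \<and>
     \<comment> \<open>(T-4)\<close>
     (\<forall>i\<in>{1..d}. \<alpha> i > 0) \<and> inj_on \<alpha> {1..d} \<and>
     (\<forall>i\<in>{1..d}. (\<integral>\<^sup>+\<omega>. ennreal (A 0 \<omega> i i powr \<alpha> i) \<partial>M) = 1) \<and>
     \<comment> \<open>(T-5)\<close>
     (\<forall>i\<in>{1..d}. \<forall>j\<in>{1..d}. (\<integral>\<^sup>+\<omega>. ennreal (A 0 \<omega> i j powr \<alpha> i) \<partial>M) < \<infinity>) \<and>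
     \<comment> \<open>(T-6)\<close>
     (\<forall>i\<in>{1..d}. (\<integral>\<^sup>+\<omega>. ennreal (B 0 \<omega> i powr \<alpha> i) \<partial>M) < \<infinity>) \<and>
     \<comment> \<open>(T-7)\<close>
     (\<forall>i\<in>{1..d}. (\<integral>\<^sup>+\<omega>. ennreal (A 0 \<omega> i i powr \<alpha> i * max 0 (ln (A 0 \<omega> i i))) \<partial>M) < \<infinity>) \<and>
     \<comment> \<open>(T-8)\<close>
     (\<forall>i\<in>{1..d}. nonarith_log M (\<lambda>\<omega>. A 0 \<omega> i i))"

definition prec_rel :: "'a measure \<Rightarrow> nat \<Rightarrow> (int \<Rightarrow> 'a \<Rightarrow> nat \<Rightarrow> nat \<Rightarrow> real) \<Rightarrow> nat \<Rightarrow> nat \<Rightarrow> bool" where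
  "prec_rel M d A i j \<longleftrightarrow> i \<in> {1..d} \<and> j \<in> {1..d} \<and> measure M {\<omega>\<in>space M. A 0 \<omega> i j > 0} > 0"

definition trile :: "'a measure \<Rightarrow> nat \<Rightarrow> (int \<Rightarrow> 'a \<Rightarrow> nat \<Rightarrow> nat \<Rightarrow> real) \<Rightarrow> nat \<Rightarrow> nat \<Rightarrow> bool" where
  "trile M d A i j \<longleftrightarrow> (prec_rel M d A)\<^sup>*\<^sup>* i j"

definition trilt :: "'a measure \<Rightarrow> nat \<Rightarrow> (int \<Rightarrow> 'a \<Rightarrow> nat \<Rightarrow> nat \<Rightarrow> real) \<Rightarrow> nat \<Rightarrow> nat \<Rightarrow> bool" where
  "trilt M d A i j \<longleftrightarrow> trile M d A i j \<and> i \<noteq> j"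

definition alpha_tilde ::
  "'a measure \<Rightarrow> nat \<Rightarrow> (int \<Rightarrow> 'a \<Rightarrow> nat \<Rightarrow> nat \<Rightarrow> real) \<Rightarrow> (nat \<Rightarrow> real) \<Rightarrow> nat \<Rightarrow> real" where
  "alpha_tilde M d A \<alpha> i = Min {\<alpha> j | j. j \<in> {1..d} \<and> trile M d A i j}"

text \<open>pi_prod d A s \<omega> i j = (i,j) entry of A_0 A_{-1} ... A_{-s+1} (identity for s = 0).\<close>
fun pi_prod :: "nat \<Rightarrow> (int \<Rightarrow> 'a \<Rightarrow> nat \<Rightarrow> nat \<Rightarrow> real) \<Rightarrow> nat \<Rightarrow> 'a \<Rightarrow> nat \<Rightarrow> nat \<Rightarrow> real" where
  "pi_prod d A 0 \<omega> i j = (if i = j then 1 else 0)"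
| "pi_prod d A (Suc s) \<omega> i j = (\<Sum>k\<in>{1..d}. pi_prod d A s \<omega> i k * A (- int s) \<omega> k j)"

end

(* Replace each A_t by a version Ac_t that equals it almost surely but is nonnegative and
   vanishes off the relation "preccurlyeq" everywhere. The i-th row of Ac_0 ... Ac_(-s+1) then
   satisfies pi_l(s+1) = sum_k pi_k(s) Ac_(-s),kl, where only indices k <= l reachable from i
   contribute and pi(s) is independent of Ac_(-s).

   Put beta = alpha_j0 and ||Y|| = (E Y^beta)^(1/max 1 beta); this is subadditive and
   multiplicative on independent products, so x_l(s) = ||pi_l(s)|| obeys the triangular system
   x_l(s+1) <= sum_k x_k(s) c_kl with c_kl = ||A_kl||. Since beta is the smallest exponent among
   the reachable indices and the alpha's are distinct, E A_ll^alpha_l = 1 and strict Jensen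
   (A_ll is not a.s. 1 by non-arithmeticity) give c_ll < 1 for reachable l <> j0, while
   c_j0j0 = 1. Induction along the order shows that x_l is summable for l < j0, hence x_j0 stays
   bounded. Finally u_i(s) = E pi_j0(s)^beta is nondecreasing because E A_j0j0^beta = 1, and it
   becomes positive along a chain i = i(0) preccurlyeq ... preccurlyeq i(m) = j0; so it converges
   to a finite positive limit. *)

theory Submission
  imports Defs
begin

section \<open>Elementary inequalities\<close>

lemma powr_le_weighted_mean:
  fixes y \<theta> :: real
  assumes "0 < \<theta>" "\<theta> < 1" "0 \<le> y"
  shows "y powr \<theta> \<le> \<theta> * y + (1 - \<theta>)"
proof (cases "y = 0")
  case False
  then have "y powr \<theta> * 1 powr (1 - \<theta>) \<le> \<theta> * y + (1 - \<theta>) * 1"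
    using assms by (intro Youngs_inequality_0) auto
  then show ?thesis by simp
qed (use assms in simp)

lemma powr_less_weighted_mean:
  fixes y \<theta> :: real
  assumes "0 < \<theta>" "\<theta> < 1" "0 \<le> y" "y \<noteq> 1"
  shows "y powr \<theta> < \<theta> * y + (1 - \<theta>)"
proof -
  define z where "z = sqrt y"
  have z: "0 \<le> z" "z * z = y" "z \<noteq> 1"
    using assms by (auto simp: z_def)
  have "y powr \<theta> = z powr \<theta> * z powr \<theta>"
    using z by (metis powr_mult)
  also have "\<dots> \<le> (\<theta> * z + (1 - \<theta>)) * (\<theta> * z + (1 - \<theta>))"
    using powr_le_weighted_mean[OF assms(1,2) z(1)] z(1) assms by (intro mult_mono) auto
  also have "\<dots> = \<theta> * y + (1 - \<theta>) - \<theta> * (1 - \<theta>) * (z - 1)\<^sup>2"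
    using z(2) by (simp add: algebra_simps power2_eq_square)
  also have "\<dots> < \<theta> * y + (1 - \<theta>)"
    using assms z(3) by simp
  finally show ?thesis .
qed

lemma powr_add_le_add_powr:
  fixes x y b :: real
  assumes "0 < b" "b \<le> 1" "0 \<le> x" "0 \<le> y"
  shows "(x + y) powr b \<le> x powr b + y powr b"
proof (cases "x + y = 0")
  case False
  then have s: "0 < x + y" using assms by simp
  have frac_le: "t \<le> t powr b" if "0 \<le> t" "t \<le> 1" for t :: real
    using that assms by (metis powr_one powr_mono')
  have "1 = x / (x + y) + y / (x + y)"
    using s by (simp add: add_divide_distrib[symmetric])
  also have "\<dots> \<le> (x / (x + y)) powr b + (y / (x + y)) powr b"
    using assms s by (intro add_mono frac_le) (auto simp: divide_simps)
  also have "\<dots> = (x powr b + y powr b) / (x + y) powr b"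
    using assms by (simp add: powr_divide add_divide_distrib)
  finally show ?thesis using s by (simp add: divide_simps)
qed (use assms in simp)

lemma powr_convex_combination_le:
  fixes u v t b :: real
  assumes "1 \<le> b" "0 \<le> t" "t \<le> 1" "0 \<le> u" "0 \<le> v"
  shows "((1 - t) * u + t * v) powr b \<le> (1 - t) * u powr b + t * v powr b"
proof (cases "u = 0 \<or> v = 0")
  case False
  then show ?thesis
    using convex_onD[OF powr_convex[OF assms(1)], of t u v] assms by simp
next
  case True
  have scale: "(s * w) powr b \<le> s * w powr b" if "0 \<le> s" "s \<le> 1" "0 \<le> w" for s w :: real
  proof -
    have "(s * w) powr b = s powr b * w powr b" using that by (simp add: powr_mult)
    also have "\<dots> \<le> s * w powr b"
      using that assms powr_mono'[of 1 b s] by (intro mult_right_mono) auto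
    finally show ?thesis .
  qed
  show ?thesis using True scale assms by auto
qed

lemma powr_le_1_add_powr:
  fixes x a b :: real
  assumes "0 \<le> x" "0 \<le> a" "a \<le> b"
  shows "x powr a \<le> 1 + x powr b"
proof (cases "x \<le> 1")
  case True
  then have "x powr a \<le> 1"
    using assms by (simp add: powr_le1)
  then show ?thesis
    using powr_ge_zero[of x b] by linarith
next
  case False
  then have "x powr a \<le> x powr b"
    using assms by (intro powr_mono) auto
  then show ?thesis by simp
qed

text \<open>The pointwise form of Minkowski's inequality: weights \<open>a\<close>, \<open>c\<close> are later the norms of
  the two summands.\<close>

lemma powr_add_le_weighted:
  fixes x y a c b :: real
  assumes "1 \<le> b" "0 < a" "0 < c" "0 \<le> x" "0 \<le> y"
  shows "(x + y) powr b \<le> (a + c) powr (b - 1) * (a powr (1 - b) * x powr b + c powr (1 - b) * y powr b)"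
proof -
  define t where "t = c / (a + c)"
  have t: "0 \<le> t" "t \<le> 1" "1 - t = a / (a + c)"
    using assms by (auto simp: t_def divide_simps)
  have "x + y = (a + c) * ((1 - t) * (x / a) + t * (y / c))"
    using assms t by (simp add: t_def divide_simps)
  then have "(x + y) powr b = (a + c) powr b * ((1 - t) * (x / a) + t * (y / c)) powr b"
    using assms t by (simp add: powr_mult)
  also have "\<dots> \<le> (a + c) powr b * ((1 - t) * (x / a) powr b + t * (y / c) powr b)"
    using assms t by (intro mult_left_mono powr_convex_combination_le) auto
  also have "\<dots> = (a + c) powr (b - 1) * (a powr (1 - b) * x powr b + c powr (1 - b) * y powr b)"
  proof -
    have eqs: "(a + c) powr (b - 1) = (a + c) powr b / (a + c)"
      "a powr (1 - b) = a / a powr b" "c powr (1 - b) = c / c powr b"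
      "(x / a) powr b = x powr b / a powr b" "(y / c) powr b = y powr b / c powr b"
      using assms by (simp_all add: powr_diff powr_divide)
    show ?thesis
      unfolding t(3) unfolding t_def eqs using assms(2,3) by (simp add: ring_distribs)
  qed
  finally show ?thesis .
qed

section \<open>Triangular systems of recursive inequalities\<close>

lemma summable_if_contracting_recurrence:
  fixes a b :: "nat \<Rightarrow> real" and r :: real
  assumes "\<And>n. 0 \<le> a n" "\<And>n. 0 \<le> b n" "summable b" "0 \<le> r" "r < 1"
    and rec: "\<And>n. a (Suc n) \<le> r * a n + b n"
  shows "summable a"
proof (rule summableI_nonneg_bounded[where x = "(a 0 + suminf b) / (1 - r)"])
  fix n
  have "(\<Sum>k<n. a k) \<le> (\<Sum>k<Suc n. a k)"
    using assms by simp
  also have "\<dots> = a 0 + (\<Sum>k<n. a (Suc k))"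
    by (rule sum.lessThan_Suc_shift)
  also have "\<dots> \<le> a 0 + (\<Sum>k<n. r * a k + b k)"
    using rec by (intro add_left_mono sum_mono) auto
  also have "\<dots> \<le> a 0 + r * (\<Sum>k<n. a k) + suminf b"
    using assms by (simp add: sum.distrib sum_distrib_left sum_le_suminf)
  finally have "(1 - r) * (\<Sum>k<n. a k) \<le> a 0 + suminf b"
    by (simp add: algebra_simps)
  then show "(\<Sum>k<n. a k) \<le> (a 0 + suminf b) / (1 - r)"
    using assms by (simp add: field_simps)
qed (use assms in simp)

context
  fixes S :: "nat set" and x c :: "nat \<Rightarrow> nat \<Rightarrow> real"
  assumes finite_S: "finite S"
    and x_nonneg: "\<And>l s. 0 \<le> x l s" and c_nonneg: "\<And>k l. 0 \<le> c k l"
    and c_upper: "\<And>k l. l < k \<Longrightarrow> c k l = 0"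
    and x_rec: "\<And>l s. l \<in> S \<Longrightarrow> x l (Suc s) \<le> (\<Sum>k\<in>S. x k s * c k l)"
begin

lemma triangular_rec_diagonal:
  assumes "l \<in> S"
  shows "x l (Suc s) \<le> c l l * x l s + (\<Sum>k\<in>{k\<in>S. k < l}. x k s * c k l)"
proof -
  have "(\<Sum>k\<in>S - {l}. x k s * c k l) = (\<Sum>k\<in>{k\<in>S. k < l}. x k s * c k l)"
    using finite_S c_upper by (intro sum.mono_neutral_right) (auto simp: neq_iff)
  then show ?thesis
    using x_rec[OF assms, of s] assms finite_S by (simp add: sum.remove mult.commute)
qed

lemma triangular_rec_off_diagonal_summable:
  assumes "\<And>k. k < l \<Longrightarrow> k \<in> S \<Longrightarrow> summable (x k)"
  shows "summable (\<lambda>s. \<Sum>k\<in>{k\<in>S. k < l}. x k s * c k l)"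
  using assms by (intro summable_sum summable_mult2) auto

lemma triangular_rec_summable:
  assumes contracting: "\<And>l. l \<in> S \<Longrightarrow> l < j \<Longrightarrow> c l l < 1"
  shows "l \<in> S \<Longrightarrow> l < j \<Longrightarrow> summable (x l)"
proof (induction l rule: less_induct)
  case (less l)
  show ?case
  proof (rule summable_if_contracting_recurrence[where r = "c l l"])
    show "summable (\<lambda>s. \<Sum>k\<in>{k\<in>S. k < l}. x k s * c k l)"
      using less by (intro triangular_rec_off_diagonal_summable) auto
    show "x l (Suc s) \<le> c l l * x l s + (\<Sum>k\<in>{k\<in>S. k < l}. x k s * c k l)" for s
      using less.prems(1) by (rule triangular_rec_diagonal)
  qed (use less.prems contracting x_nonneg c_nonneg in \<open>auto intro: sum_nonneg\<close>)
qed

lemma triangular_rec_bounded: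
  assumes contracting: "\<And>l. l \<in> S \<Longrightarrow> l < j \<Longrightarrow> c l l < 1"
    and "j \<in> S" "c j j \<le> 1"
  shows "\<exists>K. \<forall>s. x j s \<le> K"
proof -
  define b where "b s = (\<Sum>k\<in>{k\<in>S. k < j}. x k s * c k j)" for s
  have b_nonneg: "0 \<le> b s" for s
    unfolding b_def using x_nonneg c_nonneg by (intro sum_nonneg) auto
  have "summable b"
    unfolding b_def
    by (intro triangular_rec_off_diagonal_summable triangular_rec_summable[OF contracting])
  have step: "x j (Suc s) \<le> x j s + b s" for s
  proof -
    have "c j j * x j s \<le> x j s"
      using assms(3) x_nonneg by (simp add: mult_left_le_one_le c_nonneg)
    then show ?thesis
      using triangular_rec_diagonal[OF assms(2), of s] unfolding b_def by linarith
  qed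
  have "x j s \<le> x j 0 + suminf b" for s
  proof -
    have "x j s \<le> x j 0 + (\<Sum>t<s. b t)"
    proof (induction s)
      case (Suc s)
      then show ?case using step[of s] by simp
    qed simp
    also have "\<dots> \<le> x j 0 + suminf b"
      using \<open>summable b\<close> b_nonneg by (simp add: sum_le_suminf)
    finally show ?thesis .
  qed
  then show ?thesis by blast
qed

end

section \<open>Moments of order \<open>\<beta>\<close>\<close>

text \<open>For \<open>\<beta> \<le> 1\<close> the map \<open>moment_norm\<close> is \<open>E X\<^sup>\<beta>\<close> itself, which is subadditive; for
  \<open>\<beta> \<ge> 1\<close> it is the \<open>L\<^sup>\<beta>\<close> norm. Either way the triangle inequality holds.\<close>

locale power_moments =
  fixes M :: "'a measure" and \<beta> :: real
  assumes \<beta>_pos: "0 < \<beta>"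
begin

definition moment :: "('a \<Rightarrow> real) \<Rightarrow> ennreal" where
  "moment X = (\<integral>\<^sup>+\<omega>. ennreal (X \<omega> powr \<beta>) \<partial>M)"

definition moment_norm :: "('a \<Rightarrow> real) \<Rightarrow> real" where
  "moment_norm X = enn2real (moment X) powr (1 / max 1 \<beta>)"

lemma moment_norm_nonneg: "0 \<le> moment_norm X"
  unfolding moment_norm_def by simp

lemma moment_eq_moment_norm_powr:
  assumes "moment X < \<infinity>"
  shows "moment X = ennreal (moment_norm X powr max 1 \<beta>)"
  using assms unfolding moment_norm_def by (simp add: powr_powr)

lemma moment_cong_AE: "AE \<omega> in M. X \<omega> = Y \<omega> \<Longrightarrow> moment X = moment Y"
  unfolding moment_def by (rule nn_integral_cong_AE) auto

lemma moment_norm_cong_AE: "AE \<omega> in M. X \<omega> = Y \<omega> \<Longrightarrow> moment_norm X = moment_norm Y"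
  unfolding moment_norm_def by (simp add: moment_cong_AE)

lemma moment_zero [simp]: "moment (\<lambda>_. 0) = 0"
  unfolding moment_def by simp

lemma moment_norm_zero [simp]: "moment_norm (\<lambda>_. 0) = 0"
  unfolding moment_norm_def by simp

lemma AE_eq_0_if_moment_eq_0:
  assumes "X \<in> borel_measurable M" "\<And>\<omega>. 0 \<le> X \<omega>" "moment X = 0"
  shows "AE \<omega> in M. X \<omega> = 0"
proof -
  have "AE \<omega> in M. ennreal (X \<omega> powr \<beta>) = 0"
    using assms unfolding moment_def by (subst nn_integral_0_iff_AE[symmetric]) auto
  then show ?thesis by eventually_elim (use assms(2) in auto)
qed

lemma moment_norm_eq_0_iff: "moment X < \<infinity> \<Longrightarrow> moment_norm X = 0 \<longleftrightarrow> moment X = 0"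
  unfolding moment_norm_def by (auto simp: enn2real_eq_0_iff)

lemma moment_norm_mult:
  assumes "moment Z = moment X * moment Y" "moment X < \<infinity>" "moment Y < \<infinity>"
  shows "moment_norm Z = moment_norm X * moment_norm Y"
  unfolding moment_norm_def assms(1) by (simp add: enn2real_mult powr_mult)

lemma moment_add_le_subadditive:
  assumes "\<beta> \<le> 1" "X \<in> borel_measurable M" "Y \<in> borel_measurable M"
    "\<And>\<omega>. 0 \<le> X \<omega>" "\<And>\<omega>. 0 \<le> Y \<omega>"
  shows "moment (\<lambda>\<omega>. X \<omega> + Y \<omega>) \<le> moment X + moment Y"
proof -
  have "moment (\<lambda>\<omega>. X \<omega> + Y \<omega>) \<le> (\<integral>\<^sup>+\<omega>. ennreal (X \<omega> powr \<beta>) + ennreal (Y \<omega> powr \<beta>) \<partial>M)"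
    unfolding moment_def using powr_add_le_add_powr[OF \<beta>_pos assms(1)] assms(4,5)
    by (intro nn_integral_mono) (simp flip: ennreal_plus)
  also have "\<dots> = moment X + moment Y"
    unfolding moment_def using assms(2,3) by (intro nn_integral_add) auto
  finally show ?thesis .
qed

lemma moment_add_le_weighted:
  assumes "1 \<le> \<beta>" "0 < a" "0 < c" "X \<in> borel_measurable M" "Y \<in> borel_measurable M"
    "\<And>\<omega>. 0 \<le> X \<omega>" "\<And>\<omega>. 0 \<le> Y \<omega>"
  shows "moment (\<lambda>\<omega>. X \<omega> + Y \<omega>)
    \<le> ennreal ((a + c) powr (\<beta> - 1)) * (ennreal (a powr (1 - \<beta>)) * moment X + ennreal (c powr (1 - \<beta>)) * moment Y)"
proof -
  have "moment (\<lambda>\<omega>. X \<omega> + Y \<omega>) \<le> (\<integral>\<^sup>+\<omega>. ennreal ((a + c) powr (\<beta> - 1)) *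
      (ennreal (a powr (1 - \<beta>)) * ennreal (X \<omega> powr \<beta>) + ennreal (c powr (1 - \<beta>)) * ennreal (Y \<omega> powr \<beta>)) \<partial>M)"
    unfolding moment_def using powr_add_le_weighted[OF assms(1-3) assms(6,7)]
    by (intro nn_integral_mono) (simp flip: ennreal_mult ennreal_plus)
  also have "\<dots> = ennreal ((a + c) powr (\<beta> - 1)) * (ennreal (a powr (1 - \<beta>)) * moment X + ennreal (c powr (1 - \<beta>)) * moment Y)"
    unfolding moment_def using assms(4,5)
    by (simp add: nn_integral_cmult nn_integral_add)
  finally show ?thesis .
qed

lemma moment_add_finite:
  assumes "X \<in> borel_measurable M" "Y \<in> borel_measurable M" "\<And>\<omega>. 0 \<le> X \<omega>" "\<And>\<omega>. 0 \<le> Y \<omega>"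
    "moment X < \<infinity>" "moment Y < \<infinity>"
  shows "moment (\<lambda>\<omega>. X \<omega> + Y \<omega>) < \<infinity>"
proof (cases "\<beta> \<le> 1")
  case True
  then show ?thesis
    using moment_add_le_subadditive[OF True assms(1-4)] assms(5,6)
    by (simp add: le_less_trans)
next
  case False
  then show ?thesis
    using moment_add_le_weighted[of 1 1, OF _ _ _ assms(1-4)] assms(5,6)
    by (simp add: ennreal_mult_less_top le_less_trans)
qed

lemma moment_norm_add_le_if_le_1:
  assumes "\<beta> \<le> 1"
    and X: "X \<in> borel_measurable M" "\<And>\<omega>. 0 \<le> X \<omega>" "moment X < \<infinity>"
    and Y: "Y \<in> borel_measurable M" "\<And>\<omega>. 0 \<le> Y \<omega>" "moment Y < \<infinity>"
  shows "moment_norm (\<lambda>\<omega>. X \<omega> + Y \<omega>) \<le> moment_norm X + moment_norm Y"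
proof -
  have "enn2real (moment (\<lambda>\<omega>. X \<omega> + Y \<omega>)) \<le> enn2real (moment X + moment Y)"
    using moment_add_le_subadditive[OF assms(1) X(1) Y(1) X(2) Y(2)] X(3) Y(3)
    by (intro enn2real_mono) auto
  also have "\<dots> = enn2real (moment X) + enn2real (moment Y)"
    using X(3) Y(3) by (simp add: enn2real_plus)
  finally show ?thesis
    using assms(1) unfolding moment_norm_def by simp
qed

lemma moment_norm_add_le_if_ge_1:
  assumes "1 \<le> \<beta>"
    and X: "X \<in> borel_measurable M" "\<And>\<omega>. 0 \<le> X \<omega>" "moment X < \<infinity>" "0 < moment_norm X"
    and Y: "Y \<in> borel_measurable M" "\<And>\<omega>. 0 \<le> Y \<omega>" "moment Y < \<infinity>" "0 < moment_norm Y"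
  shows "moment_norm (\<lambda>\<omega>. X \<omega> + Y \<omega>) \<le> moment_norm X + moment_norm Y"
proof -
  define a c where "a = moment_norm X" and "c = moment_norm Y"
  have ac: "0 < a" "0 < c" using X(4) Y(4) by (auto simp: a_def c_def)
  have "moment (\<lambda>\<omega>. X \<omega> + Y \<omega>) \<le>
      ennreal ((a + c) powr (\<beta> - 1) * (a powr (1 - \<beta>) * a powr \<beta> + c powr (1 - \<beta>) * c powr \<beta>))"
    using moment_add_le_weighted[OF assms(1) ac X(1) Y(1) X(2) Y(2)] assms(1)
      moment_eq_moment_norm_powr[OF X(3)] moment_eq_moment_norm_powr[OF Y(3)]
    by (simp add: a_def c_def ennreal_mult)
  also have "(a + c) powr (\<beta> - 1) * (a powr (1 - \<beta>) * a powr \<beta> + c powr (1 - \<beta>) * c powr \<beta>)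
      = (a + c) powr \<beta>"
    using ac by (simp add: powr_add[symmetric] powr_diff field_simps)
  finally have "enn2real (moment (\<lambda>\<omega>. X \<omega> + Y \<omega>)) \<le> (a + c) powr \<beta>"
    by (simp add: enn2real_leI)
  then have "moment_norm (\<lambda>\<omega>. X \<omega> + Y \<omega>) \<le> ((a + c) powr \<beta>) powr (1 / \<beta>)"
    unfolding moment_norm_def using assms(1) \<beta>_pos by (simp add: max_def powr_mono2)
  also have "\<dots> = a + c"
    using ac \<beta>_pos by (simp add: powr_powr)
  finally show ?thesis by (simp add: a_def c_def)
qed

lemma moment_norm_add_null:
  assumes "X \<in> borel_measurable M" "\<And>\<omega>. 0 \<le> X \<omega>" "moment X < \<infinity>" "moment_norm X = 0"
  shows "moment_norm (\<lambda>\<omega>. X \<omega> + Y \<omega>) = moment_norm Y"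
proof -
  have "AE \<omega> in M. X \<omega> = 0"
    using AE_eq_0_if_moment_eq_0[OF assms(1,2)] moment_norm_eq_0_iff[OF assms(3)] assms(4) by simp
  then have "AE \<omega> in M. X \<omega> + Y \<omega> = Y \<omega>"
    by eventually_elim simp
  then show ?thesis
    by (rule moment_norm_cong_AE)
qed

lemma moment_norm_add_le:
  assumes X: "X \<in> borel_measurable M" "\<And>\<omega>. 0 \<le> X \<omega>" "moment X < \<infinity>"
    and Y: "Y \<in> borel_measurable M" "\<And>\<omega>. 0 \<le> Y \<omega>" "moment Y < \<infinity>"
  shows "moment_norm (\<lambda>\<omega>. X \<omega> + Y \<omega>) \<le> moment_norm X + moment_norm Y"
proof -
  consider "\<beta> \<le> 1" | "moment_norm X = 0" | "moment_norm Y = 0"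
    | "1 \<le> \<beta>" "0 < moment_norm X" "0 < moment_norm Y"
    using moment_norm_nonneg[of X] moment_norm_nonneg[of Y] by linarith
  then show ?thesis
  proof cases
    case 1
    then show ?thesis using X Y by (rule moment_norm_add_le_if_le_1)
  next
    case 2
    then show ?thesis using moment_norm_add_null[OF X] by simp
  next
    case 3
    then show ?thesis using moment_norm_add_null[OF Y, of X] by (simp add: add.commute)
  next
    case 4
    then show ?thesis using X Y by (intro moment_norm_add_le_if_ge_1)
  qed
qed

lemma moment_norm_sum_le:
  assumes "finite F"
    and "\<And>m. m \<in> F \<Longrightarrow> X m \<in> borel_measurable M" "\<And>m \<omega>. m \<in> F \<Longrightarrow> 0 \<le> X m \<omega>"
    and "\<And>m. m \<in> F \<Longrightarrow> moment (X m) < \<infinity>"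
  shows "moment (\<lambda>\<omega>. \<Sum>m\<in>F. X m \<omega>) < \<infinity>"
    and "moment_norm (\<lambda>\<omega>. \<Sum>m\<in>F. X m \<omega>) \<le> (\<Sum>m\<in>F. moment_norm (X m))"
proof -
  have "moment (\<lambda>\<omega>. \<Sum>m\<in>F. X m \<omega>) < \<infinity> \<and>
      moment_norm (\<lambda>\<omega>. \<Sum>m\<in>F. X m \<omega>) \<le> (\<Sum>m\<in>F. moment_norm (X m))"
    using assms
  proof (induction F rule: finite_induct)
    case (insert m F)
    let ?Y = "\<lambda>\<omega>. \<Sum>m\<in>F. X m \<omega>"
    have Y: "?Y \<in> borel_measurable M" "\<And>\<omega>. 0 \<le> ?Y \<omega>" "moment ?Y < \<infinity>"
      and IH: "moment_norm ?Y \<le> (\<Sum>m\<in>F. moment_norm (X m))"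
      using insert by (auto intro: sum_nonneg)
    have X: "X m \<in> borel_measurable M" "\<And>\<omega>. 0 \<le> X m \<omega>" "moment (X m) < \<infinity>"
      using insert.prems by auto
    show ?case
      using moment_add_finite[OF X(1) Y(1) X(2) Y(2) X(3) Y(3)]
        moment_norm_add_le[OF X Y] IH insert.hyps by simp
  qed simp
  then show "moment (\<lambda>\<omega>. \<Sum>m\<in>F. X m \<omega>) < \<infinity>"
    and "moment_norm (\<lambda>\<omega>. \<Sum>m\<in>F. X m \<omega>) \<le> (\<Sum>m\<in>F. moment_norm (X m))"
    by auto
qed

text \<open>Integrate the tangent-line bound \<open>y\<^sup>\<theta> \<le> \<theta> y + 1 - \<theta>\<close>, strict off \<open>y = 1\<close>, at
  \<open>y = X\<^sup>a\<close> with \<open>\<theta> = \<beta> / a\<close>.\<close>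

lemma moment_less_1:
  assumes "prob_space M" and X: "X \<in> borel_measurable M" "\<And>\<omega>. 0 \<le> X \<omega>"
    and "\<beta> < a" and moment_a: "(\<integral>\<^sup>+\<omega>. ennreal (X \<omega> powr a) \<partial>M) = 1"
    and not_1: "\<not> (AE \<omega> in M. X \<omega> = 1)"
  shows "moment X < 1"
proof -
  interpret prob_space M by fact
  define \<theta> where "\<theta> = \<beta> / a"
  have a: "0 < a" using \<beta>_pos assms(4) by simp
  have \<theta>: "0 < \<theta>" "\<theta> < 1" using \<beta>_pos assms(4) a by (auto simp: \<theta>_def)
  define f where "f \<omega> = \<theta> * X \<omega> powr a + (1 - \<theta>)" for \<omega>
  have powr_\<beta>: "X \<omega> powr \<beta> = (X \<omega> powr a) powr \<theta>" for \<omega>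
    using a X(2)[of \<omega>] by (simp add: powr_powr \<theta>_def)
  have le: "X \<omega> powr \<beta> \<le> f \<omega>" for \<omega>
    unfolding powr_\<beta> f_def by (rule powr_le_weighted_mean[OF \<theta>]) simp
  have less: "X \<omega> powr \<beta> < f \<omega>" if "X \<omega> \<noteq> 1" for \<omega>
  proof -
    have "X \<omega> powr a \<noteq> 1"
      using that a X(2)[of \<omega>] by (cases "X \<omega> = 0") (simp_all add: less_le)
    then show ?thesis
      unfolding powr_\<beta> f_def by (intro powr_less_weighted_mean[OF \<theta>]) simp_all
  qed
  have int_a: "integrable M (\<lambda>\<omega>. X \<omega> powr a)"
    using X moment_a by (intro integrableI_nonneg) auto
  have E_a: "(\<integral>\<omega>. X \<omega> powr a \<partial>M) = 1"
    using nn_integral_eq_integral[OF int_a] moment_a by simp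
  have int_f: "integrable M f"
    unfolding f_def using int_a by simp
  have int_\<beta>: "integrable M (\<lambda>\<omega>. X \<omega> powr \<beta>)"
    using X by (intro Bochner_Integration.integrable_bound[OF int_f] AE_I2)
      (auto intro: order_trans[OF le abs_ge_self])
  have "(\<integral>\<omega>. X \<omega> powr \<beta> \<partial>M) < (\<integral>\<omega>. f \<omega> \<partial>M)"
  proof (rule integral_less_AE[OF int_\<beta> int_f, where A = "{\<omega>\<in>space M. X \<omega> \<noteq> 1}"])
    show "{\<omega>\<in>space M. X \<omega> \<noteq> 1} \<in> sets M"
      using X by measurable
    then show "emeasure M {\<omega>\<in>space M. X \<omega> \<noteq> 1} \<noteq> 0"
      using not_1 by (subst (asm) AE_iff_measurable) auto
  qed (use le less in \<open>auto simp: less_le\<close>)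
  also have "(\<integral>\<omega>. f \<omega> \<partial>M) = 1"
    unfolding f_def using int_a E_a by (simp add: prob_space)
  finally have "(\<integral>\<omega>. X \<omega> powr \<beta> \<partial>M) < 1" .
  moreover have "moment X = ennreal (\<integral>\<omega>. X \<omega> powr \<beta> \<partial>M)"
    unfolding moment_def by (intro nn_integral_eq_integral int_\<beta>) simp
  ultimately show ?thesis by (simp add: ennreal_less_iff)
qed

lemma moment_norm_less_1:
  assumes "moment X < 1"
  shows "moment_norm X < 1"
proof -
  have "enn2real (moment X) < 1"
    using assms by (cases "moment X") (auto simp: ennreal_less_iff)
  then show ?thesis
    unfolding moment_norm_def using powr_less_mono2[of "1 / max 1 \<beta>" _ 1] by simp
qed

end

lemma (in prob_space) nn_integral_indep_var_mult:
  fixes f g :: "'b \<Rightarrow> ennreal"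
  assumes "indep_var N Y N' Y'" "f \<in> borel_measurable N" "g \<in> borel_measurable N'"
  shows "(\<integral>\<^sup>+\<omega>. f (Y \<omega>) * g (Y' \<omega>) \<partial>M) = (\<integral>\<^sup>+\<omega>. f (Y \<omega>) \<partial>M) * (\<integral>\<^sup>+\<omega>. g (Y' \<omega>) \<partial>M)"
proof -
  have "indep_var borel (f \<circ> Y) borel (g \<circ> Y')"
    by (rule indep_var_compose[OF assms])
  then have "indep_vars (\<lambda>_. borel) (case_bool (f \<circ> Y) (g \<circ> Y')) UNIV"
    unfolding indep_var_def by (simp add: case_bool_if)
  then have "(\<integral>\<^sup>+\<omega>. (\<Prod>b\<in>UNIV. case_bool (f \<circ> Y) (g \<circ> Y') b \<omega>) \<partial>M)
      = (\<Prod>b\<in>UNIV. \<integral>\<^sup>+\<omega>. case_bool (f \<circ> Y) (g \<circ> Y') b \<omega> \<partial>M)"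
    by (intro indep_vars_nn_integral) simp_all
  then show ?thesis by (simp add: UNIV_bool mult.commute comp_def)
qed

section \<open>Moments of the \<open>i\<close>-th row of the matrix product\<close>

lemma pi_prod_cong:
  assumes "\<And>t. - int s < t \<Longrightarrow> t \<le> 0 \<Longrightarrow> A t \<omega> = A' t \<omega>'"
  shows "pi_prod d A s \<omega> k l = pi_prod d A' s \<omega>' k l"
  using assms
proof (induction s arbitrary: l)
  case (Suc s)
  have "pi_prod d A s \<omega> k m = pi_prod d A' s \<omega>' k m" for m
    using Suc.prems by (intro Suc.IH) auto
  moreover have "A (- int s) \<omega> = A' (- int s) \<omega>'"
    using Suc.prems by simp
  ultimately show ?case by simp
qed simp

locale min_index_setting = prob_space M for M :: "'a measure" +
  fixes d :: nat and A :: "int \<Rightarrow> 'a \<Rightarrow> nat \<Rightarrow> nat \<Rightarrow> real" and B :: "int \<Rightarrow> 'a \<Rightarrow> nat \<Rightarrow> real"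
    and \<alpha> :: "nat \<Rightarrow> real" and i j0 :: nat
  assumes iid: "iid_AB M d A B" and condT: "condT M d A B \<alpha>"
    and i_in: "i \<in> {1..d}" and j0_in: "j0 \<in> {1..d}"
    and i_trilt_j0: "trilt M d A i j0"
    and alpha_tilde_eq: "alpha_tilde M d A \<alpha> i = \<alpha> j0"
begin

abbreviation X :: "int \<Rightarrow> 'a \<Rightarrow> ((nat \<times> nat) + nat) \<Rightarrow> real" where
  "X \<equiv> AB_vec d A B"

lemma indep_X: "indep_vars (\<lambda>_. AB_space d) X UNIV"
  using iid unfolding iid_AB_def by blast

lemma distr_X: "distr M (AB_space d) (X t) = distr M (AB_space d) (X 0)"
  using iid unfolding iid_AB_def by blast

lemma X_measurable [measurable]: "X t \<in> measurable M (AB_space d)"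
  using indep_X unfolding indep_vars_def by blast

lemma X_Inl: "k \<in> {1..d} \<Longrightarrow> l \<in> {1..d} \<Longrightarrow> X t \<omega> (Inl (k, l)) = A t \<omega> k l"
  unfolding AB_vec_def coord_idx_def by auto

lemma Inl_measurable:
  "k \<in> {1..d} \<Longrightarrow> l \<in> {1..d} \<Longrightarrow> (\<lambda>v. v (Inl (k, l))) \<in> borel_measurable (AB_space d)"
  unfolding AB_space_def by (rule measurable_component_singleton) (auto simp: coord_idx_def)

lemma A_measurable [measurable]:
  assumes "k \<in> {1..d}" "l \<in> {1..d}"
  shows "(\<lambda>\<omega>. A t \<omega> k l) \<in> borel_measurable M"
  using measurable_compose[OF X_measurable Inl_measurable[OF assms]] X_Inl[OF assms] by simp

lemma AE_X_shift:
  assumes "{v \<in> space (AB_space d). P v} \<in> sets (AB_space d)" "AE \<omega> in M. P (X 0 \<omega>)"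
  shows "AE \<omega> in M. P (X t \<omega>)"
  using assms(2) unfolding AE_distr_iff[OF X_measurable assms(1), symmetric] distr_X[of t] .

lemma nn_integral_X_shift:
  assumes "f \<in> borel_measurable (AB_space d)"
  shows "(\<integral>\<^sup>+\<omega>. f (X t \<omega>) \<partial>M) = (\<integral>\<^sup>+\<omega>. f (X 0 \<omega>) \<partial>M)"
proof -
  have "(\<integral>\<^sup>+\<omega>. f (X t \<omega>) \<partial>M) = (\<integral>\<^sup>+v. f v \<partial>distr M (AB_space d) (X t))"
    by (rule nn_integral_distr[symmetric]) (simp_all add: assms)
  also have "\<dots> = (\<integral>\<^sup>+\<omega>. f (X 0 \<omega>) \<partial>M)"
    unfolding distr_X[of t] by (rule nn_integral_distr) (simp_all add: assms)
  finally show ?thesis .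
qed

lemma A_nonneg_AE: "AE \<omega> in M. \<forall>k\<in>{1..d}. \<forall>l\<in>{1..d}. 0 \<le> A 0 \<omega> k l"
  using condT unfolding condT_def by (auto elim: eventually_mono)

lemma A_below_diagonal: "k \<in> {1..d} \<Longrightarrow> l \<in> {1..d} \<Longrightarrow> l < k \<Longrightarrow> prob {\<omega>\<in>space M. A 0 \<omega> k l = 0} = 1"
  using condT unfolding condT_def by blast

lemma \<alpha>_pos: "l \<in> {1..d} \<Longrightarrow> 0 < \<alpha> l"
  using condT unfolding condT_def by blast

lemma inj_\<alpha>: "inj_on \<alpha> {1..d}"
  using condT unfolding condT_def by blast

lemma diagonal_moment: "l \<in> {1..d} \<Longrightarrow> (\<integral>\<^sup>+\<omega>. ennreal (A 0 \<omega> l l powr \<alpha> l) \<partial>M) = 1"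
  using condT unfolding condT_def by blast

lemma A_moment_finite: "k \<in> {1..d} \<Longrightarrow> l \<in> {1..d} \<Longrightarrow> (\<integral>\<^sup>+\<omega>. ennreal (A 0 \<omega> k l powr \<alpha> k) \<partial>M) < \<infinity>"
  using condT unfolding condT_def by blast

lemma diagonal_nonarith: "l \<in> {1..d} \<Longrightarrow> nonarith_log M (\<lambda>\<omega>. A 0 \<omega> l l)"
  using condT unfolding condT_def by blast

lemma prec_rel_in: "prec_rel M d A k l \<Longrightarrow> k \<in> {1..d} \<and> l \<in> {1..d}"
  unfolding prec_rel_def by blast

lemma AE_A_le_0_if_not_prec:
  assumes "k \<in> {1..d}" "l \<in> {1..d}" "\<not> prec_rel M d A k l"
  shows "AE \<omega> in M. A 0 \<omega> k l \<le> 0"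
proof -
  have pos: "{\<omega>\<in>space M. A 0 \<omega> k l > 0} \<in> events"
    using A_measurable[OF assms(1,2)] by measurable
  have "prob {\<omega>\<in>space M. A 0 \<omega> k l > 0} = 0"
    using assms unfolding prec_rel_def by (simp add: zero_less_measure_iff)
  then have null: "emeasure M {\<omega>\<in>space M. A 0 \<omega> k l > 0} = 0"
    by (simp add: emeasure_eq_measure)
  have "{\<omega>\<in>space M. \<not> A 0 \<omega> k l \<le> 0} = {\<omega>\<in>space M. A 0 \<omega> k l > 0}"
    by auto
  from AE_iff_measurable[OF pos this] null show ?thesis by simp
qed

lemma prec_rel_le:
  assumes "prec_rel M d A k l"
  shows "k \<le> l"
proof (rule ccontr)
  assume "\<not> k \<le> l"
  have kl: "k \<in> {1..d}" "l \<in> {1..d}" using prec_rel_in[OF assms] by auto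
  have zero: "{\<omega>\<in>space M. A 0 \<omega> k l = 0} \<in> events"
    using A_measurable[OF kl] by measurable
  have "prob {\<omega>\<in>space M. A 0 \<omega> k l > 0} \<le> prob (space M - {\<omega>\<in>space M. A 0 \<omega> k l = 0})"
    by (rule finite_measure_mono) (use zero in auto)
  also have "\<dots> = 1 - 1"
    using prob_compl[OF zero] A_below_diagonal[OF kl] \<open>\<not> k \<le> l\<close> by simp
  finally show False
    using assms unfolding prec_rel_def by simp
qed

text \<open>\<open>Ac\<close> is a version of \<open>A\<close> that is nonnegative and vanishes off \<open>\<preccurlyeq>\<close> everywhere, not only
  almost surely; being a function of \<open>(A\<^sub>t, B\<^sub>t)\<close> it inherits the independence of the pairs.\<close>

definition clean :: "nat \<Rightarrow> nat \<Rightarrow> (((nat \<times> nat) + nat) \<Rightarrow> real) \<Rightarrow> real" where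
  "clean k l v = (if prec_rel M d A k l then max 0 (v (Inl (k, l))) else 0)"

definition Ac :: "int \<Rightarrow> 'a \<Rightarrow> nat \<Rightarrow> nat \<Rightarrow> real" where
  "Ac t \<omega> k l = clean k l (X t \<omega>)"

lemma clean_measurable [measurable]: "clean k l \<in> borel_measurable (AB_space d)"
  unfolding clean_def using Inl_measurable prec_rel_in by (cases "prec_rel M d A k l") auto

lemma Ac_measurable [measurable]: "(\<lambda>\<omega>. Ac t \<omega> k l) \<in> borel_measurable M"
  unfolding Ac_def by measurable

lemma Ac_nonneg: "0 \<le> Ac t \<omega> k l"
  unfolding Ac_def clean_def by auto

lemma Ac_if_prec: "prec_rel M d A k l \<Longrightarrow> Ac t \<omega> k l = max 0 (A t \<omega> k l)"
  unfolding Ac_def clean_def using prec_rel_in X_Inl by auto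

lemma Ac_eq_0_if_not_prec: "\<not> prec_rel M d A k l \<Longrightarrow> Ac t \<omega> k l = 0"
  unfolding Ac_def clean_def by auto

lemma Ac_below_diagonal: "l < k \<Longrightarrow> Ac t \<omega> k l = 0"
  using prec_rel_le Ac_eq_0_if_not_prec by (meson not_le)

lemma AE_A_eq_Ac: "AE \<omega> in M. \<forall>k\<in>{1..d}. \<forall>l\<in>{1..d}. A t \<omega> k l = Ac t \<omega> k l"
proof (intro AE_finite_allI)
  fix k l assume kl: "k \<in> {1..d}" "l \<in> {1..d}"
  have "AE \<omega> in M. A 0 \<omega> k l = Ac 0 \<omega> k l"
  proof (cases "prec_rel M d A k l")
    case True
    from A_nonneg_AE show ?thesis
    proof eventually_elim
      case (elim \<omega>)
      then have "0 \<le> A 0 \<omega> k l" using kl by blast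
      then show ?case by (simp add: Ac_if_prec[OF True])
    qed
  next
    case False
    from A_nonneg_AE AE_A_le_0_if_not_prec[OF kl False] show ?thesis
    proof eventually_elim
      case (elim \<omega>)
      then have "0 \<le> A 0 \<omega> k l" "A 0 \<omega> k l \<le> 0" using kl by blast+
      then show ?case by (simp add: Ac_eq_0_if_not_prec[OF False])
    qed
  qed
  then have at_0: "AE \<omega> in M. X 0 \<omega> (Inl (k, l)) = clean k l (X 0 \<omega>)"
    by eventually_elim (simp add: X_Inl[OF kl] Ac_def)
  have "{v \<in> space (AB_space d). v (Inl (k, l)) = clean k l v} \<in> sets (AB_space d)"
    using Inl_measurable[OF kl] clean_measurable by (rule measurable_equality_set)
  from AE_X_shift[OF this at_0] show "AE \<omega> in M. A t \<omega> k l = Ac t \<omega> k l"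
    by eventually_elim (simp add: X_Inl[OF kl] Ac_def)
qed simp_all

lemma nn_integral_Ac_shift:
  assumes "f \<in> borel_measurable borel"
  shows "(\<integral>\<^sup>+\<omega>. f (Ac t \<omega> k l) \<partial>M) = (\<integral>\<^sup>+\<omega>. f (Ac 0 \<omega> k l) \<partial>M)"
  unfolding Ac_def by (intro nn_integral_X_shift measurable_compose[OF clean_measurable assms])

lemma nn_integral_Ac_eq_A:
  assumes "k \<in> {1..d}" "l \<in> {1..d}"
  shows "(\<integral>\<^sup>+\<omega>. f (Ac 0 \<omega> k l) \<partial>M) = (\<integral>\<^sup>+\<omega>. f (A 0 \<omega> k l) \<partial>M)"
  using AE_A_eq_Ac[of 0] assms by (intro nn_integral_cong_AE) auto

definition reach :: "nat set" where
  "reach = {l. trile M d A i l}"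

lemma reach_subset: "reach \<subseteq> {1..d}"
proof
  fix l assume "l \<in> reach"
  then have "(prec_rel M d A)\<^sup>*\<^sup>* i l" unfolding reach_def trile_def by simp
  then show "l \<in> {1..d}"
    by (induction rule: rtranclp_induct) (use i_in prec_rel_in in auto)
qed

lemma finite_reach: "finite reach"
  using reach_subset finite_subset by blast

lemma i_in_reach: "i \<in> reach"
  unfolding reach_def trile_def by simp

lemma j0_in_reach: "j0 \<in> reach"
  using i_trilt_j0 unfolding reach_def trilt_def by simp

lemma reach_step: "k \<in> reach \<Longrightarrow> prec_rel M d A k l \<Longrightarrow> l \<in> reach"
  unfolding reach_def trile_def by (simp add: rtranclp.rtrancl_into_rtrancl)

lemma \<alpha>_j0_le:
  assumes "m \<in> reach"
  shows "\<alpha> j0 \<le> \<alpha> m"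
proof -
  have "finite {\<alpha> j |j. j \<in> {1..d} \<and> trile M d A i j}"
    by (rule finite_subset[of _ "\<alpha> ` {1..d}"]) auto
  moreover have "\<alpha> m \<in> {\<alpha> j |j. j \<in> {1..d} \<and> trile M d A i j}"
    using assms reach_subset unfolding reach_def by blast
  ultimately have "alpha_tilde M d A \<alpha> i \<le> \<alpha> m"
    unfolding alpha_tilde_def by (rule Min_le)
  then show ?thesis
    using alpha_tilde_eq by simp
qed

lemma \<alpha>_j0_less:
  assumes "m \<in> reach" "m \<noteq> j0"
  shows "\<alpha> j0 < \<alpha> m"
proof -
  have "\<alpha> m \<noteq> \<alpha> j0"
    using inj_\<alpha> assms reach_subset j0_in by (meson inj_on_contraD subsetD)
  then show ?thesis
    using \<alpha>_j0_le[OF assms(1)] by simp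
qed

definition prod_row :: "nat \<Rightarrow> 'a \<Rightarrow> nat \<Rightarrow> real" where
  "prod_row s \<omega> l = pi_prod d Ac s \<omega> i l"

lemma prod_row_0: "prod_row 0 \<omega> l = (if i = l then 1 else 0)"
  unfolding prod_row_def by simp

lemma prod_row_Suc: "prod_row (Suc s) \<omega> l = (\<Sum>k\<in>{1..d}. prod_row s \<omega> k * Ac (- int s) \<omega> k l)"
  unfolding prod_row_def by simp

lemma prod_row_nonneg: "0 \<le> prod_row s \<omega> l"
  by (induction s arbitrary: l) (auto simp: prod_row_0 prod_row_Suc Ac_nonneg intro!: sum_nonneg)

lemma prod_row_measurable [measurable]: "(\<lambda>\<omega>. prod_row s \<omega> l) \<in> borel_measurable M"
  by (induction s arbitrary: l) (auto simp: prod_row_0 prod_row_Suc)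

lemma prod_row_outside_reach: "l \<notin> reach \<Longrightarrow> prod_row s \<omega> l = 0"
proof (induction s arbitrary: l)
  case (Suc s)
  have "prod_row s \<omega> k * Ac (- int s) \<omega> k l = 0" for k
  proof (cases "k \<in> reach")
    case True
    then have "\<not> prec_rel M d A k l" using reach_step Suc.prems by blast
    then show ?thesis by (simp add: Ac_eq_0_if_not_prec)
  qed (use Suc.IH in simp)
  then show ?case unfolding prod_row_Suc by (intro sum.neutral) simp
qed (use i_in_reach in \<open>auto simp: prod_row_0\<close>)

lemma prod_row_Suc_reach: "prod_row (Suc s) \<omega> l = (\<Sum>k\<in>reach. prod_row s \<omega> k * Ac (- int s) \<omega> k l)"
  unfolding prod_row_Suc using reach_subset
  by (intro sum.mono_neutral_right) (auto simp: prod_row_outside_reach)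

lemma prod_row_Suc_ge: "k \<in> {1..d} \<Longrightarrow> prod_row s \<omega> k * Ac (- int s) \<omega> k l \<le> prod_row (Suc s) \<omega> l"
  unfolding prod_row_Suc
  by (rule member_le_sum[where f = "\<lambda>k. prod_row s \<omega> k * Ac (- int s) \<omega> k l"])
    (auto simp: prod_row_nonneg Ac_nonneg)

lemma AE_pi_prod_eq_prod_row: "AE \<omega> in M. \<forall>l\<in>{1..d}. pi_prod d A s \<omega> i l = prod_row s \<omega> l"
proof (induction s)
  case 0
  then show ?case by (simp add: prod_row_0)
next
  case (Suc s)
  from Suc AE_A_eq_Ac[of "- int s"] show ?case
  proof eventually_elim
    case (elim \<omega>)
    then show ?case
      unfolding pi_prod.simps prod_row_Suc by (auto intro!: sum.cong)
  qed
qed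

definition past :: "nat \<Rightarrow> int set" where
  "past s = {t. - int s < t \<and> t \<le> 0}"

text \<open>\<open>prod_row s\<close> as a function of the path \<open>t \<mapsto> (A\<^sub>t, B\<^sub>t)\<close>, \<open>-s < t \<le> 0\<close>, which makes
  its independence of \<open>Ac (-s)\<close> an instance of \<open>indep_var_restrict\<close>; the outcome argument
  of \<open>pi_prod\<close> is a dummy.\<close>

definition row_of_path :: "nat \<Rightarrow> (int \<Rightarrow> ((nat \<times> nat) + nat) \<Rightarrow> real) \<Rightarrow> nat \<Rightarrow> real" where
  "row_of_path s Y l = pi_prod d (\<lambda>t (_ :: unit) k l. clean k l (Y t)) s () i l"

lemma clean_component_measurable:
  assumes "t \<in> T"
  shows "(\<lambda>Y. clean k l (Y t)) \<in> borel_measurable (PiM T (\<lambda>_. AB_space d))"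
  using measurable_compose[OF measurable_component_singleton[OF assms] clean_measurable] by simp

lemma row_of_path_measurable:
  assumes "past s \<subseteq> T"
  shows "(\<lambda>Y. row_of_path s Y l) \<in> borel_measurable (PiM T (\<lambda>_. AB_space d))"
  using assms
proof (induction s arbitrary: l)
  case 0
  then show ?case unfolding row_of_path_def by simp
next
  case (Suc s)
  have "- int s \<in> T" "past s \<subseteq> T"
    using Suc.prems unfolding past_def by auto
  then have "(\<lambda>Y. clean k l (Y (- int s))) \<in> borel_measurable (PiM T (\<lambda>_. AB_space d))" for k
    by (intro clean_component_measurable)
  then show ?case
    using Suc.IH[OF \<open>past s \<subseteq> T\<close>] unfolding row_of_path_def by simp
qed

lemma prod_row_eq_row_of_path: "prod_row s \<omega> l = row_of_path s (restrict (\<lambda>t. X t \<omega>) (past s)) l"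
  unfolding prod_row_def row_of_path_def
  by (rule pi_prod_cong) (auto simp: past_def Ac_def fun_eq_iff)

lemma nn_integral_prod_row_mult_Ac:
  assumes f: "f \<in> borel_measurable borel" and g: "g \<in> borel_measurable borel"
  shows "(\<integral>\<^sup>+\<omega>. f (prod_row s \<omega> m) * g (Ac (- int s) \<omega> k l) \<partial>M)
    = (\<integral>\<^sup>+\<omega>. f (prod_row s \<omega> m) \<partial>M) * (\<integral>\<^sup>+\<omega>. g (Ac 0 \<omega> k l) \<partial>M)"
proof -
  have indep: "indep_var (PiM (past s) (\<lambda>_. AB_space d)) (\<lambda>\<omega>. restrict (\<lambda>t. X t \<omega>) (past s))
      (PiM {- int s} (\<lambda>_. AB_space d)) (\<lambda>\<omega>. restrict (\<lambda>t. X t \<omega>) {- int s})"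
    by (rule indep_var_restrict[OF indep_X]) (auto simp: past_def)
  have f_past: "(\<lambda>Y. f (row_of_path s Y m)) \<in> borel_measurable (PiM (past s) (\<lambda>_. AB_space d))"
    by (rule measurable_compose[OF row_of_path_measurable f]) simp
  have g_now: "(\<lambda>Y. g (clean k l (Y (- int s)))) \<in> borel_measurable (PiM {- int s} (\<lambda>_. AB_space d))"
    by (rule measurable_compose[OF clean_component_measurable g]) simp
  have "(\<integral>\<^sup>+\<omega>. f (prod_row s \<omega> m) * g (Ac (- int s) \<omega> k l) \<partial>M)
      = (\<integral>\<^sup>+\<omega>. f (prod_row s \<omega> m) \<partial>M) * (\<integral>\<^sup>+\<omega>. g (Ac (- int s) \<omega> k l) \<partial>M)"
    using nn_integral_indep_var_mult[OF indep f_past g_now]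
    unfolding prod_row_eq_row_of_path Ac_def restrict_apply'[OF singletonI] .
  then show ?thesis
    by (simp only: nn_integral_Ac_shift[OF g, of "- int s"])
qed

sublocale power_moments M "\<alpha> j0"
  by unfold_locales (rule \<alpha>_pos[OF j0_in])

lemma moment_prod_row_mult_Ac:
  "moment (\<lambda>\<omega>. prod_row s \<omega> m * Ac (- int s) \<omega> k l)
    = moment (\<lambda>\<omega>. prod_row s \<omega> m) * moment (\<lambda>\<omega>. Ac 0 \<omega> k l)"
proof -
  have powr_measurable: "(\<lambda>x. ennreal (x powr \<alpha> j0)) \<in> borel_measurable borel"
    by measurable
  have "ennreal ((prod_row s \<omega> m * Ac (- int s) \<omega> k l) powr \<alpha> j0)
      = ennreal (prod_row s \<omega> m powr \<alpha> j0) * ennreal (Ac (- int s) \<omega> k l powr \<alpha> j0)" for \<omega>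
    using prod_row_nonneg Ac_nonneg by (simp add: powr_mult ennreal_mult)
  then show ?thesis
    unfolding moment_def
    by (simp only: nn_integral_prod_row_mult_Ac[OF powr_measurable powr_measurable])
qed

lemma moment_Ac_eq_A:
  "k \<in> {1..d} \<Longrightarrow> l \<in> {1..d} \<Longrightarrow> moment (\<lambda>\<omega>. Ac 0 \<omega> k l) = (\<integral>\<^sup>+\<omega>. ennreal (A 0 \<omega> k l powr \<alpha> j0) \<partial>M)"
  unfolding moment_def by (rule nn_integral_Ac_eq_A)

lemma moment_Ac_finite:
  assumes "m \<in> reach"
  shows "moment (\<lambda>\<omega>. Ac 0 \<omega> m l) < \<infinity>"
proof (cases "prec_rel M d A m l")
  case True
  have ml: "m \<in> {1..d}" "l \<in> {1..d}" using prec_rel_in[OF True] by auto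
  have "ennreal (Ac 0 \<omega> m l powr \<alpha> j0) \<le> 1 + ennreal (Ac 0 \<omega> m l powr \<alpha> m)" for \<omega>
    using ennreal_leI[OF powr_le_1_add_powr[OF Ac_nonneg _ \<alpha>_j0_le[OF assms]]] \<alpha>_pos[OF j0_in]
    by simp
  then have "moment (\<lambda>\<omega>. Ac 0 \<omega> m l) \<le> (\<integral>\<^sup>+\<omega>. 1 + ennreal (Ac 0 \<omega> m l powr \<alpha> m) \<partial>M)"
    unfolding moment_def by (intro nn_integral_mono)
  also have "\<dots> = 1 + (\<integral>\<^sup>+\<omega>. ennreal (A 0 \<omega> m l powr \<alpha> m) \<partial>M)"
    by (simp add: nn_integral_add emeasure_space_1 nn_integral_Ac_eq_A[OF ml, of "\<lambda>x. ennreal (x powr \<alpha> m)"])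
  also have "\<dots> < \<infinity>"
    using A_moment_finite[OF ml] by simp
  finally show ?thesis .
qed (simp add: Ac_eq_0_if_not_prec)

lemma moment_prod_row_finite: "moment (\<lambda>\<omega>. prod_row s \<omega> l) < \<infinity>"
proof (induction s arbitrary: l)
  case 0
  have "moment (\<lambda>\<omega>. prod_row 0 \<omega> l) \<le> (\<integral>\<^sup>+\<omega>. 1 \<partial>M)"
    unfolding moment_def by (intro nn_integral_mono) (simp add: prod_row_0)
  then show ?case
    by (simp add: emeasure_space_1 le_less_trans)
next
  case (Suc s)
  have "moment (\<lambda>\<omega>. prod_row s \<omega> k * Ac (- int s) \<omega> k l) < \<infinity>" if "k \<in> reach" for k
    using Suc.IH[of k] moment_Ac_finite[OF that, of l]
    by (simp add: moment_prod_row_mult_Ac ennreal_mult_less_top)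
  then show ?case
    unfolding prod_row_Suc_reach
    by (intro moment_norm_sum_le(1) finite_reach) (auto simp: prod_row_nonneg Ac_nonneg)
qed

lemma moment_norm_prod_row_Suc_le:
  "moment_norm (\<lambda>\<omega>. prod_row (Suc s) \<omega> l)
    \<le> (\<Sum>k\<in>reach. moment_norm (\<lambda>\<omega>. prod_row s \<omega> k) * moment_norm (\<lambda>\<omega>. Ac 0 \<omega> k l))"
proof -
  have finite_terms: "moment (\<lambda>\<omega>. prod_row s \<omega> k * Ac (- int s) \<omega> k l) < \<infinity>" if "k \<in> reach" for k
    using moment_prod_row_finite[of s k] moment_Ac_finite[OF that, of l]
    by (simp add: moment_prod_row_mult_Ac ennreal_mult_less_top)
  have "moment_norm (\<lambda>\<omega>. prod_row (Suc s) \<omega> l)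
      \<le> (\<Sum>k\<in>reach. moment_norm (\<lambda>\<omega>. prod_row s \<omega> k * Ac (- int s) \<omega> k l))"
    unfolding prod_row_Suc_reach using finite_terms
    by (intro moment_norm_sum_le(2) finite_reach) (auto simp: prod_row_nonneg Ac_nonneg)
  also have "\<dots> = (\<Sum>k\<in>reach. moment_norm (\<lambda>\<omega>. prod_row s \<omega> k) * moment_norm (\<lambda>\<omega>. Ac 0 \<omega> k l))"
    using moment_prod_row_finite moment_Ac_finite
    by (intro sum.cong refl moment_norm_mult moment_prod_row_mult_Ac)
  finally show ?thesis .
qed

lemma moment_Ac_j0: "moment (\<lambda>\<omega>. Ac 0 \<omega> j0 j0) = 1"
  using moment_Ac_eq_A[OF j0_in j0_in] diagonal_moment[OF j0_in] by simp

text \<open>\<open>A l l\<close> is not a.s. \<open>1\<close> because \<open>log (A l l)\<close> is non-arithmetic, so strict Jensen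
  turns \<open>E (A l l) powr \<alpha> l = 1\<close> into a moment below \<open>1\<close> for the smaller exponent \<open>\<alpha> j0\<close>.\<close>

lemma moment_norm_Ac_diagonal_less_1:
  assumes "l \<in> reach" "l \<noteq> j0"
  shows "moment_norm (\<lambda>\<omega>. Ac 0 \<omega> l l) < 1"
proof -
  have l: "l \<in> {1..d}" using assms reach_subset by auto
  have not_1: "\<not> (AE \<omega> in M. Ac 0 \<omega> l l = 1)"
  proof
    assume "AE \<omega> in M. Ac 0 \<omega> l l = 1"
    with AE_A_eq_Ac[of 0] have "AE \<omega> in M. A 0 \<omega> l l = 1"
      by eventually_elim (use l in auto)
    then have "AE \<omega> in M. A 0 \<omega> l l > 0 \<longrightarrow> ln (A 0 \<omega> l l) \<in> {1 * real_of_int k |k. True}"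
      by eventually_elim (auto intro: exI[of _ 0])
    then show False
      using diagonal_nonarith[OF l] unfolding nonarith_log_def by (meson zero_less_one)
  qed
  have "moment (\<lambda>\<omega>. Ac 0 \<omega> l l) < 1"
    using diagonal_moment[OF l] nn_integral_Ac_eq_A[OF l l, of "\<lambda>x. ennreal (x powr \<alpha> l)"]
    by (intro moment_less_1[OF prob_space_axioms _ Ac_nonneg \<alpha>_j0_less[OF assms] _ not_1]) auto
  then show ?thesis
    by (rule moment_norm_less_1)
qed

lemma moment_prod_row_bounded: "\<exists>K. \<forall>s. moment (\<lambda>\<omega>. prod_row s \<omega> j0) \<le> ennreal K"
proof -
  let ?x = "\<lambda>l s. moment_norm (\<lambda>\<omega>. prod_row s \<omega> l)" and ?c = "\<lambda>k l. moment_norm (\<lambda>\<omega>. Ac 0 \<omega> k l)"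
  have "?c j0 j0 = 1"
    using moment_Ac_j0 unfolding moment_norm_def by simp
  then obtain K where K: "\<And>s. ?x j0 s \<le> K"
    using triangular_rec_bounded[of reach ?x ?c j0] finite_reach moment_norm_nonneg
      moment_norm_prod_row_Suc_le moment_norm_Ac_diagonal_less_1 j0_in_reach
    by (force simp: Ac_below_diagonal)
  have "moment (\<lambda>\<omega>. prod_row s \<omega> j0) \<le> ennreal (K powr max 1 (\<alpha> j0))" for s
    using moment_eq_moment_norm_powr[OF moment_prod_row_finite] K[of s] moment_norm_nonneg
    by (simp add: ennreal_leI powr_mono2)
  then show ?thesis by blast
qed

lemma incseq_moment_prod_row: "incseq (\<lambda>s. moment (\<lambda>\<omega>. prod_row s \<omega> j0))"
proof (rule incseq_SucI)
  fix s
  have "moment (\<lambda>\<omega>. prod_row s \<omega> j0) = moment (\<lambda>\<omega>. prod_row s \<omega> j0 * Ac (- int s) \<omega> j0 j0)"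
    by (simp add: moment_prod_row_mult_Ac moment_Ac_j0)
  also have "\<dots> \<le> moment (\<lambda>\<omega>. prod_row (Suc s) \<omega> j0)"
    unfolding moment_def using j0_in prod_row_nonneg Ac_nonneg prod_row_Suc_ge \<alpha>_pos[OF j0_in]
    by (intro nn_integral_mono ennreal_leI powr_mono2) auto
  finally show "moment (\<lambda>\<omega>. prod_row s \<omega> j0) \<le> moment (\<lambda>\<omega>. prod_row (Suc s) \<omega> j0)" .
qed

lemma moment_Ac_pos:
  assumes "prec_rel M d A k l"
  shows "0 < moment (\<lambda>\<omega>. Ac 0 \<omega> k l)"
proof (rule ccontr)
  have kl: "k \<in> {1..d}" "l \<in> {1..d}" using prec_rel_in[OF assms] by auto
  assume "\<not> 0 < moment (\<lambda>\<omega>. Ac 0 \<omega> k l)"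
  then have "AE \<omega> in M. Ac 0 \<omega> k l = 0"
    by (intro AE_eq_0_if_moment_eq_0 Ac_measurable Ac_nonneg) simp
  then have "AE \<omega> in M. A 0 \<omega> k l \<le> 0"
    by eventually_elim (simp add: Ac_if_prec[OF assms])
  moreover have "{\<omega>\<in>space M. A 0 \<omega> k l > 0} \<in> events"
    using A_measurable[OF kl] by measurable
  ultimately have "prob {\<omega>\<in>space M. A 0 \<omega> k l > 0} = 0"
    by (subst (asm) AE_iff_measurable[where N = "{\<omega>\<in>space M. A 0 \<omega> k l > 0}"])
      (auto simp: emeasure_eq_measure)
  then show False
    using assms unfolding prec_rel_def by simp
qed

lemma moment_prod_row_pos: "trile M d A i l \<Longrightarrow> \<exists>s. 0 < moment (\<lambda>\<omega>. prod_row s \<omega> l)"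
  unfolding trile_def
proof (induction rule: rtranclp_induct)
  case base
  have "moment (\<lambda>\<omega>. prod_row 0 \<omega> i) = 1"
    unfolding moment_def by (simp add: prod_row_0 emeasure_space_1)
  then show ?case by (intro exI[of _ 0]) simp
next
  case (step k l)
  obtain s where s: "0 < moment (\<lambda>\<omega>. prod_row s \<omega> k)"
    using step.IH by blast
  have "0 < moment (\<lambda>\<omega>. prod_row s \<omega> k) * moment (\<lambda>\<omega>. Ac 0 \<omega> k l)"
    using s moment_Ac_pos[OF step.hyps(2)] by (simp add: ennreal_zero_less_mult_iff)
  also have "\<dots> = moment (\<lambda>\<omega>. prod_row s \<omega> k * Ac (- int s) \<omega> k l)"
    by (simp add: moment_prod_row_mult_Ac)
  also have "\<dots> \<le> moment (\<lambda>\<omega>. prod_row (Suc s) \<omega> l)"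
    unfolding moment_def using prec_rel_in[OF step.hyps(2)] prod_row_nonneg Ac_nonneg prod_row_Suc_ge
      \<alpha>_pos[OF j0_in]
    by (intro nn_integral_mono ennreal_leI powr_mono2) auto
  finally show ?case by blast
qed

lemma moment_prod_row_converges:
  "\<exists>u. (\<lambda>s. moment (\<lambda>\<omega>. prod_row s \<omega> j0)) \<longlonglongrightarrow> u \<and> 0 < u \<and> u < \<infinity>"
proof (intro exI conjI)
  let ?u = "\<lambda>s. moment (\<lambda>\<omega>. prod_row s \<omega> j0)"
  show "?u \<longlonglongrightarrow> (SUP s. ?u s)"
    by (rule LIMSEQ_SUP[OF incseq_moment_prod_row])
  obtain s0 where "0 < ?u s0"
    using moment_prod_row_pos i_trilt_j0 unfolding trilt_def by blast
  then show "0 < (SUP s. ?u s)"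
    by (rule less_le_trans) (rule SUP_upper, simp)
  obtain K where "\<And>s. ?u s \<le> ennreal K"
    using moment_prod_row_bounded by blast
  then have "(SUP s. ?u s) \<le> ennreal K"
    by (rule SUP_least)
  then show "(SUP s. ?u s) < \<infinity>"
    using ennreal_less_top le_less_trans by (metis infinity_ennreal_def)
qed

end

theorem lemma5p7:
  fixes M :: "'a measure" and d :: nat
    and A :: "int \<Rightarrow> 'a \<Rightarrow> nat \<Rightarrow> nat \<Rightarrow> real" and B :: "int \<Rightarrow> 'a \<Rightarrow> nat \<Rightarrow> real"
    and \<alpha> :: "nat \<Rightarrow> real" and i j0 :: nat
  assumes "prob_space M"
    and "iid_AB M d A B"
    and "condT M d A B \<alpha>"
    and "i \<in> {1..d}" and "j0 \<in> {1..d}"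
    and "trilt M d A i j0"
    and "\<alpha> i > alpha_tilde M d A \<alpha> i"
    and "alpha_tilde M d A \<alpha> i = \<alpha> j0"
  shows "\<exists>u. ((\<lambda>s. \<integral>\<^sup>+\<omega>. ennreal (pi_prod d A s \<omega> i j0 powr \<alpha> j0) \<partial>M) \<longlonglongrightarrow> u)
             \<and> 0 < u \<and> u < \<infinity>"
proof -
  interpret min_index_setting M d A B \<alpha> i j0
    by (intro min_index_setting.intro min_index_setting_axioms.intro assms)
  have "(\<integral>\<^sup>+\<omega>. ennreal (pi_prod d A s \<omega> i j0 powr \<alpha> j0) \<partial>M) = moment (\<lambda>\<omega>. prod_row s \<omega> j0)" for s
    unfolding moment_def using AE_pi_prod_eq_prod_row[of s] j0_in
    by (intro nn_integral_cong_AE) auto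
  then show ?thesis
    using moment_prod_row_converges by simp
qed

end
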